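(* If a finite simple graph $G$ contains no co-triangle (no three pairwise non-adjacent vertices), then $G$ is perfectly divisible.
   Context: A graph is perfect if $\chi(F)=\omega(F)$ for every induced subgraph $F$ ($\chi$ chromatic number, $\omega$ clique number). A graph $G$ is perfectly divisible if every induced subgraph $F$ of $G$ contains a set $X$ of vertices such that $X$ meets every clique of $F$ of size $\omega(F)$ and $F[X]$ is perfect. *)

theory Defs
  imports Main
begin

text \<open>Induced subgraphs are given by vertex
  subsets F of V (with the restricted relation E).\<close>

definition simple_graph :: "'a set \<Rightarrow> ('a \<Rightarrow> 'a \<Rightarrow> bool) \<Rightarrow> bool" where
  "simple_graph V E \<longleftrightarrow> finite V \<and> (\<forall>x\<in>V. \<forall>y\<in>V. E x y \<longrightarrow> E y x) \<and> (\<forall>x\<in>V. \<not> E x x)"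

definition clique :: "('a \<Rightarrow> 'a \<Rightarrow> bool) \<Rightarrow> 'a set \<Rightarrow> bool" where
  "clique E K \<longleftrightarrow> (\<forall>x\<in>K. \<forall>y\<in>K. x \<noteq> y \<longrightarrow> E x y)"

definition clique_number :: "('a \<Rightarrow> 'a \<Rightarrow> bool) \<Rightarrow> 'a set \<Rightarrow> nat" where
  "clique_number E F = Max {card K | K. K \<subseteq> F \<and> clique E K}"

definition proper_colouring :: "('a \<Rightarrow> 'a \<Rightarrow> bool) \<Rightarrow> 'a set \<Rightarrow> nat \<Rightarrow> ('a \<Rightarrow> nat) \<Rightarrow> bool" where
  "proper_colouring E F k c \<longleftrightarrow> (\<forall>x\<in>F. c x < k) \<and> (\<forall>x\<in>F. \<forall>y\<in>F. E x y \<longrightarrow> c x \<noteq> c y)"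

definition chromatic_number :: "('a \<Rightarrow> 'a \<Rightarrow> bool) \<Rightarrow> 'a set \<Rightarrow> nat" where
  "chromatic_number E F = (LEAST k. \<exists>c. proper_colouring E F k c)"

definition perfect :: "('a \<Rightarrow> 'a \<Rightarrow> bool) \<Rightarrow> 'a set \<Rightarrow> bool" where
  "perfect E X \<longleftrightarrow> (\<forall>F\<subseteq>X. chromatic_number E F = clique_number E F)"

definition perfectly_divisible :: "('a \<Rightarrow> 'a \<Rightarrow> bool) \<Rightarrow> 'a set \<Rightarrow> bool" where
  "perfectly_divisible E V \<longleftrightarrow>
     (\<forall>F\<subseteq>V. F \<noteq> {} \<longrightarrow>
        (\<exists>X\<subseteq>F. (\<forall>K\<subseteq>F. clique E K \<and> card K = clique_number E F \<longrightarrow> K \<inter> X \<noteq> {})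
                 \<and> perfect E X))"

definition has_cotriangle :: "'a set \<Rightarrow> ('a \<Rightarrow> 'a \<Rightarrow> bool) \<Rightarrow> bool" where
  "has_cotriangle V E \<longleftrightarrow> (\<exists>x\<in>V. \<exists>y\<in>V. \<exists>z\<in>V. x \<noteq> y \<and> y \<noteq> z \<and> x \<noteq> z \<and>
      \<not> E x y \<and> \<not> E y z \<and> \<not> E x z)"

end

theory Submission
  imports Defs
begin

text \<open>Fix any vertex v of an induced subgraph F. Without co-triangles the non-neighbours
  of v form a clique, and a maximum clique avoiding v and all its non-neighbours could be
  extended by v; so X = v plus its non-neighbours meets every maximum clique. The graph
  induced on X is a clique plus an isolated vertex, which is perfect.\<close>

lemma simple_graph_subset: "simple_graph V E \<Longrightarrow> F \<subseteq> V \<Longrightarrow> simple_graph F E"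
  unfolding simple_graph_def by (auto intro: finite_subset)

lemma simple_graph_finite: "simple_graph V E \<Longrightarrow> finite V"
  by (simp add: simple_graph_def)

lemma simple_graph_sym: "simple_graph V E \<Longrightarrow> x \<in> V \<Longrightarrow> y \<in> V \<Longrightarrow> E x y \<Longrightarrow> E y x"
  by (simp add: simple_graph_def)

lemma simple_graph_irrefl: "simple_graph V E \<Longrightarrow> x \<in> V \<Longrightarrow> \<not> E x x"
  by (simp add: simple_graph_def)

lemma clique_subset: "clique E K \<Longrightarrow> L \<subseteq> K \<Longrightarrow> clique E L"
  unfolding clique_def by blast

lemma clique_empty: "clique E {}"
  by (simp add: clique_def)

lemma finite_clique_sizes: "finite F \<Longrightarrow> finite {card K | K. K \<subseteq> F \<and> clique E K}"
  by (rule finite_subset[of _ "card ` Pow F"]) auto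

lemma card_le_clique_number:
  "finite F \<Longrightarrow> K \<subseteq> F \<Longrightarrow> clique E K \<Longrightarrow> card K \<le> clique_number E F"
  unfolding clique_number_def by (rule Max_ge) (auto simp: finite_clique_sizes)

lemma clique_number_attained:
  fixes F :: "'a set"
  assumes "finite F"
  obtains K where "K \<subseteq> F" "clique E K" "card K = clique_number E F"
proof -
  have "card ({} :: 'a set) \<in> {card K | K. K \<subseteq> F \<and> clique E K}"
    using clique_empty[of E] by blast
  then have "{card K | K. K \<subseteq> F \<and> clique E K} \<noteq> {}" by blast
  then have "clique_number E F \<in> {card K | K. K \<subseteq> F \<and> clique E K}"
    unfolding clique_number_def using finite_clique_sizes[OF assms] by (rule Max_in[rotated])
  then obtain K where "clique_number E F = card K" "K \<subseteq> F" "clique E K" by blast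
  with that show thesis by simp
qed

lemma clique_number_le_colours:
  assumes "finite F" and c: "proper_colouring E F k c"
  shows "clique_number E F \<le> k"
proof -
  obtain K where K: "K \<subseteq> F" "clique E K" "card K = clique_number E F"
    using clique_number_attained[OF assms(1)] .
  have "inj_on c K"
  proof (rule inj_onI)
    fix x y assume xy: "x \<in> K" "y \<in> K" "c x = c y"
    show "x = y"
    proof (rule ccontr)
      assume "x \<noteq> y"
      with xy K have "E x y" "x \<in> F" "y \<in> F" unfolding clique_def by auto
      with c have "c x \<noteq> c y" unfolding proper_colouring_def by blast
      with xy show False by simp
    qed
  qed
  moreover have "c ` K \<subseteq> {..<k}"
    using K(1) c unfolding proper_colouring_def by auto
  ultimately have "card K \<le> card {..<k}"
    by (rule card_inj_on_le) simp
  with K(3) show ?thesis by simp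
qed

lemma chromatic_number_eq_clique_number:
  assumes "finite F" and c: "proper_colouring E F k c" and "k \<le> clique_number E F"
  shows "chromatic_number E F = clique_number E F"
proof (rule antisym)
  have "chromatic_number E F \<le> k"
    unfolding chromatic_number_def by (rule Least_le) (rule exI, rule c)
  with assms(3) show "chromatic_number E F \<le> clique_number E F" by simp
  have "\<exists>c'. proper_colouring E F (chromatic_number E F) c'"
    unfolding chromatic_number_def by (rule LeastI_ex) (rule exI, rule exI, rule c)
  then obtain c' where "proper_colouring E F (chromatic_number E F) c'" ..
  then show "clique_number E F \<le> chromatic_number E F"
    using assms(1) by (rule clique_number_le_colours[rotated])
qed

lemma perfect_clique_plus_isolated_vertex:
  assumes G: "simple_graph (insert v C) E" and "clique E C"
    and isolated: "\<forall>x\<in>C. \<not> E v x"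
  shows "perfect E (insert v C)"
  unfolding perfect_def
proof (intro allI impI)
  fix F assume F: "F \<subseteq> insert v C"
  have fin: "finite F"
    using simple_graph_finite[OF simple_graph_subset[OF G F]] .
  have irr: "\<not> E x x" if "x \<in> F" for x
    using simple_graph_irrefl[OF G] that F by blast
  define D where "D = F - {v}"
  have D: "finite D" "D \<subseteq> F" "clique E D"
    using fin F \<open>clique E C\<close> unfolding D_def by (auto intro: clique_subset)
  obtain h where h: "bij_betw h D {0..<card D}"
    using ex_bij_betw_finite_nat[OF D(1)] by blast
  define c where "c x = (if x = v then 0 else h x)" for x
  have no_v_edge: "\<not> E v x \<and> \<not> E x v" if "x \<in> F" for x
    using that F isolated simple_graph_irrefl[OF G] simple_graph_sym[OF G] by blast
  have colouring: "proper_colouring E F (max 1 (card D)) c"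
    unfolding proper_colouring_def
  proof (intro conjI ballI impI)
    fix x assume "x \<in> F"
    then show "c x < max 1 (card D)"
      using bij_betw_apply[OF h, of x] unfolding c_def D_def by auto
  next
    fix x y assume xy: "x \<in> F" "y \<in> F" "E x y"
    then have "x \<in> D" "y \<in> D" "x \<noteq> y"
      using no_v_edge irr unfolding D_def by blast+
    then show "c x \<noteq> c y"
      using h unfolding c_def D_def bij_betw_def inj_on_def by auto
  qed
  show "chromatic_number E F = clique_number E F"
  proof (cases "F = {}")
    case True
    then have "proper_colouring E F 0 c" by (simp add: proper_colouring_def)
    with fin show ?thesis by (rule chromatic_number_eq_clique_number) simp
  next
    case False
    then obtain x where "x \<in> F" by blast
    then have "card {x} \<le> clique_number E F"
      by (intro card_le_clique_number[OF fin]) (auto simp: clique_def)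
    with card_le_clique_number[OF fin D(2,3)] have "max 1 (card D) \<le> clique_number E F"
      by simp
    with fin colouring show ?thesis by (rule chromatic_number_eq_clique_number)
  qed
qed

lemma non_neighbours_clique:
  assumes "\<not> has_cotriangle V E" and "v \<in> V"
  shows "clique E {x \<in> V. x \<noteq> v \<and> \<not> E v x}"
  unfolding clique_def
proof (intro ballI impI)
  fix x y
  assume xy: "x \<in> {x \<in> V. x \<noteq> v \<and> \<not> E v x}" "y \<in> {x \<in> V. x \<noteq> v \<and> \<not> E v x}" "x \<noteq> y"
  show "E x y"
  proof (rule ccontr)
    assume "\<not> E x y"
    with xy \<open>v \<in> V\<close> have "has_cotriangle V E"
      unfolding has_cotriangle_def by (intro bexI[of _ v] bexI[of _ x] bexI[of _ y]) auto
    with assms(1) show False ..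
  qed
qed

lemma maximum_clique_meets_non_neighbourhood:
  assumes G: "simple_graph F E" and "v \<in> F"
    and K: "K \<subseteq> F" "clique E K" "card K = clique_number E F"
  shows "K \<inter> insert v {x \<in> F. \<not> E v x} \<noteq> {}"
proof
  assume disjoint: "K \<inter> insert v {x \<in> F. \<not> E v x} = {}"
  then have "v \<notin> K" by blast
  have "E v x \<and> E x v" if "x \<in> K" for x
    using disjoint that K(1) simple_graph_sym[OF G \<open>v \<in> F\<close>] by blast
  then have "clique E (insert v K)"
    using K(2) unfolding clique_def by blast
  then have "card (insert v K) \<le> clique_number E F"
    using K(1) \<open>v \<in> F\<close> simple_graph_finite[OF G] by (intro card_le_clique_number) auto
  moreover have "card (insert v K) = Suc (card K)"
    using \<open>v \<notin> K\<close> finite_subset[OF K(1) simple_graph_finite[OF G]] by simp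
  ultimately show False using K(3) by simp
qed

theorem mainTheorem12:
  fixes V :: "'a set" and E :: "'a \<Rightarrow> 'a \<Rightarrow> bool"
  assumes "simple_graph V E"
    and "\<not> has_cotriangle V E"
  shows "perfectly_divisible E V"
  unfolding perfectly_divisible_def
proof (intro allI impI)
  fix F assume "F \<subseteq> V" "F \<noteq> {}"
  then obtain v where "v \<in> F" "v \<in> V" by blast
  have G: "simple_graph F E" using assms(1) \<open>F \<subseteq> V\<close> by (rule simple_graph_subset)
  define N where "N = {x \<in> F. x \<noteq> v \<and> \<not> E v x}"
  have "N \<subseteq> {x \<in> V. x \<noteq> v \<and> \<not> E v x}"
    using \<open>F \<subseteq> V\<close> unfolding N_def by blast
  with non_neighbours_clique[OF assms(2) \<open>v \<in> V\<close>] have "clique E N"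
    by (rule clique_subset)
  have "insert v N \<subseteq> F" using \<open>v \<in> F\<close> unfolding N_def by blast
  have "perfect E (insert v N)"
    using simple_graph_subset[OF G \<open>insert v N \<subseteq> F\<close>] \<open>clique E N\<close>
    by (rule perfect_clique_plus_isolated_vertex) (simp add: N_def)
  moreover have "insert v N = insert v {x \<in> F. \<not> E v x}"
    unfolding N_def by blast
  then have "\<forall>K\<subseteq>F. clique E K \<and> card K = clique_number E F \<longrightarrow> K \<inter> insert v N \<noteq> {}"
    using maximum_clique_meets_non_neighbourhood[OF G \<open>v \<in> F\<close>] by simp
  ultimately show "\<exists>X\<subseteq>F. (\<forall>K\<subseteq>F. clique E K \<and> card K = clique_number E F \<longrightarrow> K \<inter> X \<noteq> {})
      \<and> perfect E X"
    using \<open>insert v N \<subseteq> F\<close> by blast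
qed

end
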